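(* Let $G$ be a bipartite permutation graph and let $M$ be a matching in $G$. The following are equivalent: (i) $M$ is uniquely restricted; (ii) there is no alternating cycle of length 4 with respect to $M$ in $G$; (iii) for any two edges $e,e'\in M$, $\{e,e'\}$ is a uniquely restricted matching in $G$.
   Context: Graphs are finite, simple, undirected. For a permutation $\pi$ of $\{1,\dots,n\}$, $G_\pi$ has vertex set $\{1,\dots,n\}$ and edges $ij$ with $(i-j)(\pi(i)-\pi(j))<0$; a permutation graph is a graph isomorphic to some $G_\pi$, and a bipartite permutation graph is a bipartite permutation graph. A matching is a set of pairwise vertex-disjoint edges; it is uniquely restricted if no other matching of $G$ matches exactly the same vertex set. An alternating cycle with respect to $M$ is an even cycle of $G$ in which every second edge belongs to $M$. *)

theory Defs
  imports Main
begin

definition graph :: "'a set \<Rightarrow> 'a set set \<Rightarrow> bool" where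
  "graph V E \<longleftrightarrow> finite V \<and> (\<forall>e\<in>E. \<exists>u v. e = {u, v} \<and> u \<noteq> v \<and> u \<in> V \<and> v \<in> V)"

definition perm_edges :: "nat \<Rightarrow> (nat \<Rightarrow> nat) \<Rightarrow> nat set set" where
  "perm_edges n \<pi> = {{i, j} | i j. i \<in> {1..n} \<and> j \<in> {1..n} \<and>
      (int i - int j) * (int (\<pi> i) - int (\<pi> j)) < 0}"

definition permutation_graph :: "'a set \<Rightarrow> 'a set set \<Rightarrow> bool" where
  "permutation_graph V E \<longleftrightarrow> graph V E \<and>
     (\<exists>n \<pi> f. bij_betw \<pi> {1..n} {1..n} \<and> bij_betw f V {1..n} \<and>
        (\<forall>u\<in>V. \<forall>v\<in>V. {u, v} \<in> E \<longleftrightarrow> {f u, f v} \<in> perm_edges n \<pi>))"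

definition bipartite :: "'a set \<Rightarrow> 'a set set \<Rightarrow> bool" where
  "bipartite V E \<longleftrightarrow> (\<exists>A B. A \<union> B = V \<and> A \<inter> B = {} \<and>
      (\<forall>e\<in>E. card (e \<inter> A) = 1 \<and> card (e \<inter> B) = 1))"

definition bipartite_permutation_graph :: "'a set \<Rightarrow> 'a set set \<Rightarrow> bool" where
  "bipartite_permutation_graph V E \<longleftrightarrow> permutation_graph V E \<and> bipartite V E"

definition matching :: "'a set set \<Rightarrow> 'a set set \<Rightarrow> bool" where
  "matching E M \<longleftrightarrow> M \<subseteq> E \<and> (\<forall>e\<in>M. \<forall>e'\<in>M. e \<noteq> e' \<longrightarrow> e \<inter> e' = {})"

definition uniquely_restricted :: "'a set set \<Rightarrow> 'a set set \<Rightarrow> bool" where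
  "uniquely_restricted E M \<longleftrightarrow> matching E M \<and>
     (\<forall>M'. matching E M' \<and> \<Union>M' = \<Union>M \<longrightarrow> M' = M)"

text \<open>An alternating cycle w.r.t. M, given by its distinct vertex list cs = [v_0,...,v_(k-1)]
  with edges {v_i, v_(i+1 mod k)}: even length (at least 4), all edges in E,
  and every second edge (those at even positions) in M.\<close>
definition alternating_cycle :: "'a set set \<Rightarrow> 'a set set \<Rightarrow> 'a list \<Rightarrow> bool" where
  "alternating_cycle E M cs \<longleftrightarrow> distinct cs \<and> even (length cs) \<and> length cs \<ge> 4 \<and>
     (\<forall>i < length cs. {cs ! i, cs ! ((i + 1) mod length cs)} \<in> E) \<and>
     (\<forall>i < length cs. even i \<longrightarrow> {cs ! i, cs ! ((i + 1) mod length cs)} \<in> M)"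

end

theory Submission
  imports Defs
begin

text \<open>
  Represent the bipartite permutation graph by two injective coordinates X and Y (the positions
  of a vertex in the two rows of the permutation diagram), so that two vertices are adjacent iff
  X and Y order them oppositely. Being bipartite, the graph is triangle-free, hence all neighbours
  of a vertex lie on the same side of it in X.

  Swapping the two matching edges of an alternating 4-cycle gives a different matching on the same
  vertices, so a uniquely restricted matching has no such cycle. Conversely, let M' \<noteq> M cover
  the same vertices as M and call u a rematched left end if its M-partner l lies to its right and
  differs from its M'-partner l'. Such vertices exist; take a leftmost one, u. The M'-partner of l
  and the M-partner of l' are again rematched left ends, both to the right of u, and comparing
  their positions in X exhibits an alternating 4-cycle through the M-edge {u, l}.
  Condition (iii) is equivalent to (ii) because an alternating 4-cycle uses only two edges of M.
\<close>

lemma graph_edge_vertices: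
  assumes "graph V E" "{u, v} \<in> E"
  shows "u \<in> V \<and> v \<in> V \<and> u \<noteq> v"
  using assms unfolding graph_def by (fastforce simp: doubleton_eq_iff)

lemma matching_subset_edges: "matching E M \<Longrightarrow> M \<subseteq> E"
  by (simp add: matching_def)

lemma matching_subset: "matching E M \<Longrightarrow> N \<subseteq> M \<Longrightarrow> matching E N"
  unfolding matching_def by blast

lemma matching_Un:
  assumes "matching E A" "matching E B" "\<And>e e'. e \<in> A \<Longrightarrow> e' \<in> B \<Longrightarrow> e \<inter> e' = {}"
  shows "matching E (A \<union> B)"
  using assms unfolding matching_def by (metis Int_commute Un_iff Un_least)

lemma matching_edge_eq:
  "matching E M \<Longrightarrow> e \<in> M \<Longrightarrow> e' \<in> M \<Longrightarrow> x \<in> e \<Longrightarrow> x \<in> e' \<Longrightarrow> e = e'"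
  unfolding matching_def by blast

lemma matching_partner_unique:
  assumes "matching E M" "{x, y} \<in> M" "{x, z} \<in> M"
  shows "y = z"
  using matching_edge_eq[OF assms, of x] by (auto simp: doubleton_eq_iff)

lemma matching_partner_exists:
  assumes "graph V E" "matching E M" "v \<in> \<Union>M"
  shows "\<exists>w. {v, w} \<in> M"
proof -
  obtain e where "e \<in> M" "v \<in> e" using assms(3) by blast
  moreover obtain p q where "e = {p, q}"
    using \<open>e \<in> M\<close> matching_subset_edges[OF assms(2)] assms(1) unfolding graph_def by blast
  ultimately show ?thesis by (auto simp: insert_commute)
qed

lemma matching_eq_if_subset_same_cover:
  assumes "graph V E" "matching E M" "M' \<subseteq> M" "\<Union>M' = \<Union>M"
  shows "M' = M"
proof
  show "M \<subseteq> M'"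
  proof
    fix e assume "e \<in> M"
    then obtain p q where "e = {p, q}"
      using matching_subset_edges[OF assms(2)] assms(1) unfolding graph_def by blast
    then obtain e' where "e' \<in> M'" "p \<in> e'" using assms(4) \<open>e \<in> M\<close> by blast
    then show "e \<in> M'"
      using matching_edge_eq[OF assms(2), of e e' p] assms(3) \<open>e \<in> M\<close> \<open>e = {p, q}\<close> by auto
  qed
qed (rule assms(3))

definition alternating_square :: "'a set set \<Rightarrow> 'a set set \<Rightarrow> 'a \<Rightarrow> 'a \<Rightarrow> 'a \<Rightarrow> 'a \<Rightarrow> bool" where
  "alternating_square E M a b c d \<longleftrightarrow>
     distinct [a, b, c, d] \<and> {a, b} \<in> M \<and> {b, c} \<in> E \<and> {c, d} \<in> M \<and> {d, a} \<in> E"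

lemma alternating_cycle_length_4_iff:
  assumes "M \<subseteq> E"
  shows "alternating_cycle E M [a, b, c, d] \<longleftrightarrow> alternating_square E M a b c d"
proof -
  have all_less_4: "(\<forall>i<4. P i) \<longleftrightarrow> P 0 \<and> P 1 \<and> P 2 \<and> P 3" for P :: "nat \<Rightarrow> bool"
    by (auto simp: numeral_eq_Suc less_Suc_eq)
  have length_4: "length [a, b, c, d] = 4" by simp
  show ?thesis
    using assms unfolding alternating_cycle_def alternating_square_def length_4 all_less_4 by auto
qed

lemma ex_alternating_cycle_4_iff:
  assumes "M \<subseteq> E"
  shows "(\<exists>cs. length cs = 4 \<and> alternating_cycle E M cs)
     \<longleftrightarrow> (\<exists>a b c d. alternating_square E M a b c d)"
proof -
  have "length cs = 4 \<longleftrightarrow> (\<exists>a b c d. cs = [a, b, c, d])" for cs :: "'a list"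
    by (auto simp: numeral_eq_Suc length_Suc_conv)
  then show ?thesis using alternating_cycle_length_4_iff[OF assms] by (metis (no_types))
qed

lemma uniquely_restricted_no_alternating_square:
  assumes "uniquely_restricted E M"
  shows "\<not> alternating_square E M a b c d"
proof
  assume sq: "alternating_square E M a b c d"
  have M: "matching E M" using assms by (simp add: uniquely_restricted_def)
  define M' where "M' = M - {{a, b}, {c, d}} \<union> {{b, c}, {d, a}}"
  have disjoint_square: "e \<inter> {a, b, c, d} = {}" if "e \<in> M - {{a, b}, {c, d}}" for e
    using that sq matching_edge_eq[OF M, of e "{a, b}"] matching_edge_eq[OF M, of e "{c, d}"]
    unfolding alternating_square_def by blast
  have "matching E M'"
    unfolding M'_def
  proof (rule matching_Un)
    show "matching E (M - {{a, b}, {c, d}})" using matching_subset[OF M] by blast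
    show "matching E {{b, c}, {d, a}}"
      using sq matching_subset_edges[OF M] unfolding alternating_square_def matching_def by auto
    show "e \<inter> e' = {}" if "e \<in> M - {{a, b}, {c, d}}" "e' \<in> {{b, c}, {d, a}}" for e e'
      using disjoint_square[OF that(1)] that(2) by blast
  qed
  moreover have "\<Union>M' = \<Union>M"
    using sq unfolding M'_def alternating_square_def by blast
  moreover have "M' \<noteq> M"
  proof -
    have "{b, c} \<notin> M"
      using sq matching_edge_eq[OF M, of "{b, c}" "{a, b}" b]
      unfolding alternating_square_def by (auto simp: doubleton_eq_iff)
    then show ?thesis unfolding M'_def by blast
  qed
  ultimately show False using assms unfolding uniquely_restricted_def by blast
qed

lemma ex_alternating_square_iff_ex_pair:
  "(\<exists>a b c d. alternating_square E M a b c d) \<longleftrightarrow>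
     (\<exists>e\<in>M. \<exists>e'\<in>M. \<exists>a b c d. alternating_square E {e, e'} a b c d)"
proof
  assume "\<exists>a b c d. alternating_square E M a b c d"
  then obtain a b c d where "alternating_square E M a b c d" by blast
  then have "{a, b} \<in> M" "{c, d} \<in> M" "alternating_square E {{a, b}, {c, d}} a b c d"
    unfolding alternating_square_def by auto
  then show "\<exists>e\<in>M. \<exists>e'\<in>M. \<exists>a b c d. alternating_square E {e, e'} a b c d" by blast
next
  assume "\<exists>e\<in>M. \<exists>e'\<in>M. \<exists>a b c d. alternating_square E {e, e'} a b c d"
  then obtain e e' a b c d where "e \<in> M" "e' \<in> M" "alternating_square E {e, e'} a b c d" by blast
  then have "alternating_square E M a b c d"
    unfolding alternating_square_def by auto
  then show "\<exists>a b c d. alternating_square E M a b c d" by blast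
qed

locale bipartite_permutation_model =
  fixes V :: "'a set" and E :: "'a set set" and X Y :: "'a \<Rightarrow> 'b::linorder"
  assumes graph: "graph V E"
    and inj_X: "inj_on X V" and inj_Y: "inj_on Y V"
    and edge_iff_crossing: "\<And>u v. u \<in> V \<Longrightarrow> v \<in> V \<Longrightarrow>
        {u, v} \<in> E \<longleftrightarrow> (X u < X v \<and> Y v < Y u) \<or> (X v < X u \<and> Y u < Y v)"
    and triangle_free: "\<And>a b c. {a, b} \<in> E \<Longrightarrow> {b, c} \<in> E \<Longrightarrow> {a, c} \<notin> E"
begin

lemma edge_vertices: "{u, v} \<in> E \<Longrightarrow> u \<in> V \<and> v \<in> V \<and> u \<noteq> v"
  using graph_edge_vertices[OF graph] .

lemma X_less_or_greater: "u \<in> V \<Longrightarrow> v \<in> V \<Longrightarrow> u \<noteq> v \<Longrightarrow> X u < X v \<or> X v < X u"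
  using inj_X by (metis inj_onD linorder_neqE)

lemma edge_Y_greater: "{u, v} \<in> E \<Longrightarrow> X u < X v \<Longrightarrow> Y v < Y u"
  using edge_iff_crossing[of u v] edge_vertices[of u v] by auto

lemma crossing_imp_edge: "u \<in> V \<Longrightarrow> v \<in> V \<Longrightarrow> X u < X v \<Longrightarrow> Y v < Y u \<Longrightarrow> {u, v} \<in> E"
  using edge_iff_crossing by blast

lemma non_edge_Y_less:
  assumes "u \<in> V" "v \<in> V" "{u, v} \<notin> E" "X u < X v"
  shows "Y u < Y v"
proof -
  have "Y u \<noteq> Y v" using assms(1,2,4) inj_Y by (metis inj_onD less_irrefl)
  then show ?thesis using assms crossing_imp_edge[of u v] by fastforce
qed

text \<open>Two neighbours of p on opposite sides of p would cross each other and close a triangle.\<close>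
lemma neighbours_right:
  assumes pq: "{p, q} \<in> E" and pr: "{p, r} \<in> E" and "X p < X q"
  shows "X p < X r"
proof (rule ccontr)
  assume "\<not> X p < X r"
  then have "X r < X p"
    using pr edge_vertices X_less_or_greater by blast
  moreover have "Y q < Y p" using pq \<open>X p < X q\<close> edge_Y_greater by blast
  moreover have "Y p < Y r" using pr \<open>X r < X p\<close> edge_Y_greater by (simp add: insert_commute)
  ultimately have "{r, q} \<in> E"
    using \<open>X p < X q\<close> pq pr edge_vertices crossing_imp_edge[of r q] by auto
  then show False
    using triangle_free[of q p r] pq pr by (simp add: insert_commute)
qed

lemma neighbours_left:
  assumes "{p, q} \<in> E" "{p, r} \<in> E" "X q < X p"
  shows "X r < X p"
  using assms neighbours_right[of p r q] edge_vertices[of p q] edge_vertices[of p r]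
    X_less_or_greater[of q p] X_less_or_greater[of r p] by auto

lemma matching_edges_ordered:
  assumes M: "matching E M" and no_square: "\<And>a b c d. \<not> alternating_square E M a b c d"
    and ab: "{a, b} \<in> M" "X a < X b" and cd: "{c, d} \<in> M" "X c < X d" and ac: "X a < X c"
  shows "X b < X d \<and> Y b < Y d"
proof -
  have E: "{a, b} \<in> E" "{c, d} \<in> E" using ab cd matching_subset_edges[OF M] by auto
  have V: "a \<in> V" "b \<in> V" "c \<in> V" "d \<in> V" using E edge_vertices by auto
  have "b \<noteq> d"
    using matching_partner_unique[OF M, of b a c] ab cd ac by (auto simp: insert_commute)
  have "{a, c} \<notin> E"
    using neighbours_right[of c d a] E cd ac by (auto simp: insert_commute)
  then have Yac: "Y a < Y c" using non_edge_Y_less V ac by blast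
  have Yba: "Y b < Y a" using edge_Y_greater E ab by auto
  have Xbd: "X b < X d"
  proof (rule ccontr)
    assume "\<not> X b < X d"
    then have Xdb: "X d < X b" using X_less_or_greater V \<open>b \<noteq> d\<close> by blast
    have "{d, b} \<notin> E"
      using neighbours_right[of d b c] E cd Xdb by (auto simp: insert_commute)
    then have "Y d < Y b" using non_edge_Y_less V Xdb by blast
    then have "alternating_square E M a b c d"
      unfolding alternating_square_def
      using ab cd ac Xdb Yba Yac V crossing_imp_edge[of c b] crossing_imp_edge[of a d]
      by (auto simp: insert_commute)
    then show False using no_square by blast
  qed
  have "{b, d} \<notin> E"
    using neighbours_left[of b a d] E ab Xbd by (auto simp: insert_commute)
  then show ?thesis using non_edge_Y_less V Xbd by blast
qed

lemma matching_edges_ordered_le: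
  assumes M: "matching E M" and no_square: "\<And>a b c d. \<not> alternating_square E M a b c d"
    and ab: "{a, b} \<in> M" "X a < X b" and cd: "{c, d} \<in> M" "X c < X d" and ac: "X a \<le> X c"
  shows "Y b \<le> Y d"
proof (cases "a = c")
  case True
  then show ?thesis using matching_partner_unique[OF M] ab cd by blast
next
  case False
  moreover have "a \<in> V" "c \<in> V" using ab cd matching_subset_edges[OF M] edge_vertices by blast+
  ultimately have "X a < X c" using ac X_less_or_greater by fastforce
  then show ?thesis using matching_edges_ordered[OF M no_square ab cd] by (simp add: less_imp_le)
qed

definition rematched_left_end :: "'a set set \<Rightarrow> 'a set set \<Rightarrow> 'a \<Rightarrow> bool" where
  "rematched_left_end M M' u \<longleftrightarrow> (\<exists>l l'. {u, l} \<in> M \<and> {u, l'} \<in> M' \<and> l \<noteq> l' \<and> X u < X l)"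

lemma rematched_left_end_vertex: "matching E M \<Longrightarrow> rematched_left_end M M' u \<Longrightarrow> u \<in> V"
  unfolding rematched_left_end_def using matching_subset_edges edge_vertices by blast

lemma edge_doubleton: "e \<in> E \<Longrightarrow> \<exists>p q. e = {p, q} \<and> p \<in> V \<and> q \<in> V \<and> p \<noteq> q"
  using graph unfolding graph_def by blast

lemma rematched_left_end_exists:
  assumes M: "matching E M" and M': "matching E M'" and cover: "\<Union>M' = \<Union>M" and "M' \<noteq> M"
  shows "\<exists>u. rematched_left_end M M' u"
proof -
  have "\<not> M' \<subseteq> M"
    using matching_eq_if_subset_same_cover[OF graph M _ cover] \<open>M' \<noteq> M\<close> by blast
  then obtain p q where pq: "{p, q} \<in> M'" "{p, q} \<notin> M" "p \<in> V" "q \<in> V" "p \<noteq> q"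
    using edge_doubleton matching_subset_edges[OF M'] by blast
  obtain u v where uv: "{u, v} \<in> M'" "{u, v} \<notin> M" "X u < X v"
  proof (cases "X p < X q")
    case True
    then show ?thesis using that pq by blast
  next
    case False
    then have "X q < X p" using X_less_or_greater pq by blast
    then show ?thesis using that[of q p] pq by (simp add: insert_commute)
  qed
  obtain r where ur: "{u, r} \<in> M"
    using matching_partner_exists[OF graph M] uv(1) cover by blast
  have "X u < X r"
    using neighbours_right[of u v r] uv ur matching_subset_edges[OF M] matching_subset_edges[OF M']
    by blast
  then show ?thesis
    unfolding rematched_left_end_def using ur uv by blast
qed

lemma rematched_partner:
  assumes A: "matching E A" and B: "matching E B" and cover: "\<Union>B = \<Union>A"
    and ux: "{u, x} \<in> A" and uy: "{u, y} \<in> B" and "x \<noteq> y" and "X u < X x"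
  shows "\<exists>w z. {x, w} \<in> B \<and> {w, z} \<in> A \<and> w \<noteq> u \<and> z \<noteq> x \<and> X w < X x \<and> X w < X z"
proof -
  have AE: "A \<subseteq> E" and BE: "B \<subseteq> E" using A B matching_subset_edges by auto
  obtain w where xw: "{x, w} \<in> B"
    using matching_partner_exists[OF graph B] ux cover by blast
  have "w \<noteq> u"
    using matching_partner_unique[OF B, of u x y] xw uy \<open>x \<noteq> y\<close> by (auto simp: insert_commute)
  have "X w < X x"
    using neighbours_left[of x u w] ux xw AE BE \<open>X u < X x\<close> by (auto simp: insert_commute)
  obtain z where wz: "{w, z} \<in> A"
    using matching_partner_exists[OF graph A] xw cover by blast
  have "z \<noteq> x"
    using matching_partner_unique[OF A, of x u w] ux wz \<open>w \<noteq> u\<close> by (auto simp: insert_commute)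
  have "X w < X z"
    using neighbours_right[of w x z] xw wz AE BE \<open>X w < X x\<close> by (auto simp: insert_commute)
  show ?thesis
    using xw wz \<open>w \<noteq> u\<close> \<open>z \<noteq> x\<close> \<open>X w < X x\<close> \<open>X w < X z\<close> by blast
qed

lemma alternating_square_if_crossing:
  assumes ME: "M \<subseteq> E" and "{u, l} \<in> M" "{l, w} \<in> E" "{w, z} \<in> M" "z \<noteq> l"
    and "X u < X w" "X w < X l" "X w < X z" "Y z < Y u"
  shows "alternating_square E M u l w z"
proof -
  have "u \<in> V" "z \<in> V" using assms edge_vertices by blast+
  then have "{z, u} \<in> E"
    using crossing_imp_edge[of u z] assms by (simp add: insert_commute)
  then show ?thesis
    unfolding alternating_square_def using assms by auto
qed

lemma alternating_square_if_between:
  assumes ME: "M \<subseteq> E" and ul: "{u, l} \<in> M" and ul': "{u, l'} \<in> E" and l'w: "{l', w} \<in> M"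
    and "l \<noteq> l'" and uw: "X u < X w" and wl': "X w < X l'" and wl: "X w < X l"
  shows "alternating_square E M u l w l'"
proof -
  have V: "u \<in> V" "l \<in> V" "w \<in> V" using ul l'w ME edge_vertices by blast+
  have "{w, u} \<notin> E"
    using neighbours_right[of w l' u] l'w ME wl' uw by (auto simp: insert_commute)
  then have "Y u < Y w" using non_edge_Y_less V uw by (simp add: insert_commute)
  moreover have "Y l < Y u" using edge_Y_greater ul ME uw wl by auto
  ultimately have "{w, l} \<in> E" using crossing_imp_edge V wl by simp
  then show ?thesis
    unfolding alternating_square_def
    using assms by (auto simp: insert_commute)
qed

lemma rematched_left_end_descent:
  assumes M: "matching E M" and M': "matching E M'" and cover: "\<Union>M' = \<Union>M"
    and no_square: "\<And>a b c d. \<not> alternating_square E M a b c d"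
    and u: "rematched_left_end M M' u"
  shows "\<exists>v. rematched_left_end M M' v \<and> X v < X u"
proof (rule ccontr)
  assume "\<not> ?thesis"
  then have right_of_u: "X u < X v" if "rematched_left_end M M' v" "v \<noteq> u" for v
    using that u X_less_or_greater rematched_left_end_vertex[OF M] by blast
  have ME: "M \<subseteq> E" and M'E: "M' \<subseteq> E" using M M' matching_subset_edges by auto
  obtain l l' where ul: "{u, l} \<in> M" and ul': "{u, l'} \<in> M'" and "l \<noteq> l'" and "X u < X l"
    using u unfolding rematched_left_end_def by blast
  have "X u < X l'" using neighbours_right[of u l l'] ul ul' ME M'E \<open>X u < X l\<close> by blast
  obtain u2 m where lu2: "{l, u2} \<in> M'" and u2m: "{u2, m} \<in> M" and "u2 \<noteq> u" "m \<noteq> l"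
      and "X u2 < X l" "X u2 < X m"
    using rematched_partner[OF M M' cover ul ul' \<open>l \<noteq> l'\<close> \<open>X u < X l\<close>] by blast
  then have "rematched_left_end M M' u2"
    unfolding rematched_left_end_def by (metis insert_commute)
  then have "X u < X u2" using right_of_u \<open>u2 \<noteq> u\<close> by blast
  obtain uj k where l'uj: "{l', uj} \<in> M" and "{uj, k} \<in> M'" "uj \<noteq> u" "k \<noteq> l'"
      and "X uj < X l'" "X uj < X k"
    using rematched_partner[OF M' M cover[symmetric] ul' ul \<open>l \<noteq> l'\<close>[symmetric] \<open>X u < X l'\<close>] by blast
  then have "rematched_left_end M M' uj"
    unfolding rematched_left_end_def by (metis insert_commute)
  then have "X u < X uj" using right_of_u \<open>uj \<noteq> u\<close> by blast
  show False
  proof (cases "X u2 \<le> X uj")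
    case True
    have "Y m \<le> Y l'"
      using matching_edges_ordered_le[OF M no_square u2m \<open>X u2 < X m\<close>, of uj l'] l'uj
        \<open>X uj < X l'\<close> True by (simp add: insert_commute)
    also have "Y l' < Y u" using edge_Y_greater ul' M'E \<open>X u < X l'\<close> by auto
    finally have "alternating_square E M u l u2 m"
      using alternating_square_if_crossing[OF ME ul _ u2m \<open>m \<noteq> l\<close>] lu2 M'E
        \<open>X u < X u2\<close> \<open>X u2 < X l\<close> \<open>X u2 < X m\<close> by blast
    then show False using no_square by blast
  next
    case False
    then have "alternating_square E M u l uj l'"
      using alternating_square_if_between[OF ME ul _ l'uj \<open>l \<noteq> l'\<close> \<open>X u < X uj\<close> \<open>X uj < X l'\<close>]
        ul' M'E \<open>X u2 < X l\<close> by auto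
    then show False using no_square by blast
  qed
qed

lemma no_alternating_square_imp_uniquely_restricted:
  assumes M: "matching E M" and no_square: "\<And>a b c d. \<not> alternating_square E M a b c d"
  shows "uniquely_restricted E M"
  unfolding uniquely_restricted_def
proof (intro conjI allI impI)
  fix M' assume M': "matching E M' \<and> \<Union>M' = \<Union>M"
  show "M' = M"
  proof (rule ccontr)
    assume "M' \<noteq> M"
    let ?D = "{u \<in> V. rematched_left_end M M' u}"
    have "finite ?D" using graph by (simp add: graph_def)
    moreover have "?D \<noteq> {}"
      using rematched_left_end_exists[OF M _ _ \<open>M' \<noteq> M\<close>] M' rematched_left_end_vertex[OF M]
      by blast
    ultimately obtain u where "u \<in> ?D" "\<And>v. v \<in> ?D \<Longrightarrow> \<not> X v < X u"
      using ex_is_arg_min_if_finite[of ?D X] unfolding is_arg_min_def by blast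
    then show False
      using rematched_left_end_descent[OF M _ _ no_square] M' rematched_left_end_vertex[OF M]
      by blast
  qed
qed (rule M)

lemma uniquely_restricted_iff_no_alternating_square:
  "matching E M \<Longrightarrow> uniquely_restricted E M \<longleftrightarrow> (\<nexists>a b c d. alternating_square E M a b c d)"
  by (metis uniquely_restricted_no_alternating_square no_alternating_square_imp_uniquely_restricted)

end

lemma card_doubleton_Int_eq_1_iff:
  "x \<noteq> y \<Longrightarrow> card ({x, y} \<inter> A) = 1 \<longleftrightarrow> (x \<in> A \<longleftrightarrow> y \<notin> A)"
  by (cases "x \<in> A"; cases "y \<in> A") auto

lemma bipartite_triangle_free:
  assumes bip: "bipartite V E" and graph: "graph V E" and "{a, b} \<in> E" "{b, c} \<in> E"
  shows "{a, c} \<notin> E"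
proof
  assume "{a, c} \<in> E"
  obtain A where A: "\<forall>e\<in>E. card (e \<inter> A) = 1" using bip unfolding bipartite_def by blast
  have "a \<noteq> b" "b \<noteq> c" "a \<noteq> c"
    using graph_edge_vertices[OF graph] \<open>{a, c} \<in> E\<close> assms(3,4) by blast+
  then have "(a \<in> A \<longleftrightarrow> b \<notin> A) \<and> (b \<in> A \<longleftrightarrow> c \<notin> A) \<and> (a \<in> A \<longleftrightarrow> c \<notin> A)"
    using A \<open>{a, c} \<in> E\<close> assms(3,4) card_doubleton_Int_eq_1_iff by metis
  then show False by blast
qed

lemma perm_edges_iff:
  assumes "i \<in> {1..n}" "j \<in> {1..n}"
  shows "{i, j} \<in> perm_edges n \<pi> \<longleftrightarrow> (int i - int j) * (int (\<pi> i) - int (\<pi> j)) < 0"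
proof
  assume "{i, j} \<in> perm_edges n \<pi>"
  then obtain i' j' where "{i, j} = {i', j'}" "(int i' - int j') * (int (\<pi> i') - int (\<pi> j')) < 0"
    unfolding perm_edges_def by blast
  then show "(int i - int j) * (int (\<pi> i) - int (\<pi> j)) < 0"
    by (auto simp: doubleton_eq_iff mult_less_0_iff)
next
  assume "(int i - int j) * (int (\<pi> i) - int (\<pi> j)) < 0"
  then show "{i, j} \<in> perm_edges n \<pi>" using assms unfolding perm_edges_def by blast
qed

lemma bipartite_permutation_graph_model:
  assumes "bipartite_permutation_graph V E"
  obtains X Y :: "'a \<Rightarrow> nat" where "bipartite_permutation_model V E X Y"
proof -
  have graph: "graph V E" and bip: "bipartite V E"
    using assms unfolding bipartite_permutation_graph_def permutation_graph_def by auto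
  obtain n \<pi> f where \<pi>: "bij_betw \<pi> {1..n} {1..n}" and f: "bij_betw f V {1..n}"
    and edges: "\<forall>u\<in>V. \<forall>v\<in>V. {u, v} \<in> E \<longleftrightarrow> {f u, f v} \<in> perm_edges n \<pi>"
    using assms unfolding bipartite_permutation_graph_def permutation_graph_def by blast
  have "bipartite_permutation_model V E f (\<pi> \<circ> f)"
  proof
    show "graph V E" by (rule graph)
    show "inj_on f V" using f by (rule bij_betw_imp_inj_on)
    show "inj_on (\<pi> \<circ> f) V"
      using f \<pi> by (simp add: comp_inj_on bij_betw_def)
    show "{u, v} \<in> E \<longleftrightarrow> (f u < f v \<and> (\<pi> \<circ> f) v < (\<pi> \<circ> f) u) \<or> (f v < f u \<and> (\<pi> \<circ> f) u < (\<pi> \<circ> f) v)"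
      if "u \<in> V" "v \<in> V" for u v
    proof -
      have "f u \<in> {1..n}" "f v \<in> {1..n}" using f that by (auto simp: bij_betw_def)
      then show ?thesis
        using edges that perm_edges_iff[of "f u" n "f v" \<pi>] by (auto simp: mult_less_0_iff)
    qed
    show "{a, c} \<notin> E" if "{a, b} \<in> E" "{b, c} \<in> E" for a b c
      using bipartite_triangle_free[OF bip graph that] .
  qed
  then show thesis by (rule that)
qed

theorem theorem5:
  fixes V :: "'a set" and E M :: "'a set set"
  assumes "bipartite_permutation_graph V E"
    and "matching E M"
  shows "(uniquely_restricted E M \<longleftrightarrow> \<not> (\<exists>cs. length cs = 4 \<and> alternating_cycle E M cs))
       \<and> (uniquely_restricted E M \<longleftrightarrow> (\<forall>e\<in>M. \<forall>e'\<in>M. uniquely_restricted E {e, e'}))"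
proof -
  obtain X Y :: "'a \<Rightarrow> nat" where model: "bipartite_permutation_model V E X Y"
    using bipartite_permutation_graph_model[OF assms(1)] .
  note ur_iff = bipartite_permutation_model.uniquely_restricted_iff_no_alternating_square[OF model]
  have pair_matching: "matching E {e, e'}" if "e \<in> M" "e' \<in> M" for e e'
    using that by (intro matching_subset[OF assms(2)]) auto
  have cycle: "uniquely_restricted E M \<longleftrightarrow> \<not> (\<exists>cs. length cs = 4 \<and> alternating_cycle E M cs)"
    using ur_iff[OF assms(2)] ex_alternating_cycle_4_iff[OF matching_subset_edges[OF assms(2)]]
    by simp
  have "uniquely_restricted E M \<longleftrightarrow>
      \<not> (\<exists>e\<in>M. \<exists>e'\<in>M. \<exists>a b c d. alternating_square E {e, e'} a b c d)"
    by (simp only: ur_iff[OF assms(2)] ex_alternating_square_iff_ex_pair[of E M])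
  also have "\<dots> \<longleftrightarrow> (\<forall>e\<in>M. \<forall>e'\<in>M. uniquely_restricted E {e, e'})"
    using ur_iff[OF pair_matching] by auto
  finally show ?thesis using cycle by blast
qed

end
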